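(* Let $T$ be a basic maximal rigid object of $\mathcal{C}_n$. (i) If $(T_i;T_j,T_k)$ is a non-degenerate $T$-subwing triple, there are nonzero $\mathcal{T}$-maps $f_{ji}:T_j\to T_i$ and $f_{ik}:T_i\to T_k$, and these maps are irreducible in $\operatorname{add}T$. (ii) If $(T_i;T_j,0)$ is a degenerate $T$-subwing triple, there is a nonzero $\mathcal{T}$-map $f_{ji}:T_j\to T_i$ which is irreducible in $\operatorname{add}T$; similarly, if $(T_i;0,T_k)$ is a degenerate $T$-subwing triple, there is a nonzero $\mathcal{T}$-map $f_{ik}:T_i\to T_k$ which is irreducible in $\operatorname{add}T$. (iii) There are no irreducible $\mathcal{T}$-maps in $\operatorname{add}T$ (between indecomposable summands of $T$) other than those described in (i) and (ii). (iv) If $(T_i;T_j,T_k)$ is a non-degenerate $T$-subwing triple, then $f_{ik}\circ f_{ji}=0$.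
   Context: Let $k$ be algebraically closed, $n\ge2$, $\mathcal{T}_n$ the tube of rank $n$ (finite-dimensional nilpotent representations of the cyclically oriented $\tilde A_{n-1}$-quiver; AR-translation $\tau$), $\mathcal{C}_n=D^b(\mathcal{T}_n)/\tau^{-1}[1]$ the cluster tube, with indecomposables identified with those of $\mathcal{T}_n$. Indecomposables have coordinates $(a,b)$, $a\in\mathbb{Z}/n$, $b\ge1$ the quasilength, with $\tau(a,b)=(a-1,b)$ and irreducible maps $(a,b)\to(a,b+1)$ and $(a,b)\to(a+1,b-1)$. For indecomposables $X,Y$, $\operatorname{Hom}_{\mathcal{C}_n}(X,Y)=\operatorname{Hom}_{\mathcal{T}_n}(X,Y)\oplus\operatorname{Hom}_{D^b}(X,\tau^{-1}Y[1])$; elements of the first summand are $\mathcal{T}$-maps. $T$ is maximal rigid if $\operatorname{Ext}^1_{\mathcal{C}_n}(T,T)=0$ and $\operatorname{Ext}^1(T\oplus X,T\oplus X)=0$ implies $X\in\operatorname{add}T$. A non-degenerate subwing triple $(X;Y,Z)$: $X=(a,b)$ with $3\le b\le n-1$, $Y=(a,c)$, $Z=(a+c+1,b-c-1)$ for some $1\le c\le b-2$. A degenerate subwing triple $(X;Y,Z)$: $X=(a,b)$, $2\le b\le n-1$, and either $Y=(a,b-1)$, $Z=0$, or $Y=0$, $Z=(a+1,b-1)$. A $T$-subwing triple is a subwing triple whose nonzero members are all indecomposable summands of $T$. A map between indecomposable summands of $T$ is irreducible in $\operatorname{add}T$ if it is a non-isomorphism that does not factor as a sum of composites through other objects of $\operatorname{add}T$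 via non-isomorphisms (i.e. it is nonzero in the radical modulo the square of the radical of $\operatorname{add}T$). *)

theory Defs
  imports "HOL-Computational_Algebra.Polynomial"
begin

text \<open>An indecomposable is a pair (a,b) with a < n (a in Z/n) and b \<ge> 1 the quasilength.
Concretely (a,b) is the uniserial nilpotent representation of the cyclic quiver
with basis e_0,...,e_(b-1), e_i sitting at vertex (a+i) mod n, the arrows
sending e_i to e_(i-1) and e_0 to 0.  Thus (a,b) -> (a,b+1) (inclusion) and
(a,b) -> (a+1,b-1) (quotient by the socle) are the irreducible maps.\<close>

type_synonym ind = "nat \<times> nat"

definition valid_ind :: "nat \<Rightarrow> ind \<Rightarrow> bool" where
  "valid_ind n X \<longleftrightarrow> fst X < n \<and> 1 \<le> snd X"

definition tau :: "nat \<Rightarrow> ind \<Rightarrow> ind" where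
  "tau n X = ((fst X + n - 1) mod n, snd X)"

text \<open>Basis of Hom_T(X,Y): a homomorphism out of the uniserial X is determined by
the image of its top e_(b-1) (at vertex a+b-1), which may be any element of Y at
that vertex killed by paths of length b.  The basis vector j sends the top of X
to the basis element f_j of Y.\<close>

definition hom_basis :: "nat \<Rightarrow> ind \<Rightarrow> ind \<Rightarrow> nat set" where
  "hom_basis n X Y = {j. j < snd Y \<and> j < snd X \<and>
      (fst Y + j) mod n = (fst X + snd X - 1) mod n}"

definition tmap :: "nat \<Rightarrow> ind \<Rightarrow> ind \<Rightarrow> (nat \<Rightarrow> 'k::field) \<Rightarrow> bool" where
  "tmap n X Y f \<longleftrightarrow> (\<forall>j. j \<notin> hom_basis n X Y \<longrightarrow> f j = 0)"

definition tcomp :: "nat \<Rightarrow> ind \<Rightarrow> ind \<Rightarrow> ind \<Rightarrow> (nat \<Rightarrow> 'k::field) \<Rightarrow> (nat \<Rightarrow> 'k) \<Rightarrow> nat \<Rightarrow> 'k" where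
  "tcomp n X Y Z g f = (\<lambda>m. \<Sum>j\<in>hom_basis n X Y. \<Sum>l\<in>hom_basis n Y Z.
       (if l + j + 1 = snd Y + m then f j * g l else 0))"

text \<open>Radical maps between indecomposables: non-isomorphisms.  Only for X = Y
is there an isomorphism, and the identity is the basis vector snd X - 1.\<close>

definition trad :: "nat \<Rightarrow> ind \<Rightarrow> ind \<Rightarrow> (nat \<Rightarrow> 'k::field) \<Rightarrow> bool" where
  "trad n X Y f \<longleftrightarrow> tmap n X Y f \<and> (X \<noteq> Y \<or> f (snd X - 1) = 0)"

definition trad2 :: "nat \<Rightarrow> ind set \<Rightarrow> ind \<Rightarrow> ind \<Rightarrow> (nat \<Rightarrow> 'k::field) \<Rightarrow> bool" where
  "trad2 n T X Y f \<longleftrightarrow> (\<exists>(m::nat) Zs hs gs.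
      (\<forall>t<m. Zs t \<in> T \<and> trad n X (Zs t) (hs t) \<and> trad n (Zs t) Y (gs t)) \<and>
      f = (\<lambda>i. \<Sum>t<m. tcomp n X (Zs t) Y (gs t) (hs t) i))"

definition irreducible_addT :: "nat \<Rightarrow> ind set \<Rightarrow> ind \<Rightarrow> ind \<Rightarrow> (nat \<Rightarrow> 'k::field) \<Rightarrow> bool" where
  "irreducible_addT n T X Y f \<longleftrightarrow> X \<in> T \<and> Y \<in> T \<and> trad n X Y f \<and> \<not> trad2 n T X Y f"

text \<open>Ext^1 in the cluster tube: Ext^1_C(X,Y) = Ext^1_T(X,Y) + Hom_T(X, tau Y), and
Ext^1_T(X,Y) = D Hom_T(Y, tau X) (Serre duality in the tube).\<close>

definition ext1_zero :: "nat \<Rightarrow> ind \<Rightarrow> ind \<Rightarrow> bool" where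
  "ext1_zero n X Y \<longleftrightarrow> hom_basis n Y (tau n X) = {} \<and> hom_basis n X (tau n Y) = {}"

definition rigid_set :: "nat \<Rightarrow> ind set \<Rightarrow> bool" where
  "rigid_set n T \<longleftrightarrow> (\<forall>X\<in>T. \<forall>Y\<in>T. ext1_zero n X Y)"

text \<open>A basic object is given by its (pairwise non-isomorphic) indecomposable summands.\<close>

definition basic_maximal_rigid :: "nat \<Rightarrow> ind set \<Rightarrow> bool" where
  "basic_maximal_rigid n T \<longleftrightarrow> finite T \<and> (\<forall>X\<in>T. valid_ind n X) \<and> rigid_set n T \<and>
     (\<forall>X. valid_ind n X \<and> rigid_set n (insert X T) \<longrightarrow> X \<in> T)"

definition nondeg_subwing :: "nat \<Rightarrow> ind \<Rightarrow> ind \<Rightarrow> ind \<Rightarrow> bool" where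
  "nondeg_subwing n X Y Z \<longleftrightarrow> (\<exists>a b c. X = (a, b) \<and> a < n \<and> 3 \<le> b \<and> b \<le> n - 1 \<and>
      1 \<le> c \<and> c \<le> b - 2 \<and> Y = (a, c) \<and> Z = ((a + c + 1) mod n, b - c - 1))"

text \<open>None stands for the zero object.\<close>

definition deg_subwing :: "nat \<Rightarrow> ind \<Rightarrow> ind option \<Rightarrow> ind option \<Rightarrow> bool" where
  "deg_subwing n X Y Z \<longleftrightarrow> (\<exists>a b. X = (a, b) \<and> a < n \<and> 2 \<le> b \<and> b \<le> n - 1 \<and>
      ((Y = Some (a, b - 1) \<and> Z = None) \<or> (Y = None \<and> Z = Some ((a + 1) mod n, b - 1))))"

definition T_subwing :: "nat \<Rightarrow> ind set \<Rightarrow> ind \<Rightarrow> ind option \<Rightarrow> ind option \<Rightarrow> bool" where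
  "T_subwing n T X Y Z \<longleftrightarrow> X \<in> T \<and> set_option Y \<subseteq> T \<and> set_option Z \<subseteq> T \<and>
     ((\<exists>y z. Y = Some y \<and> Z = Some z \<and> nondeg_subwing n X y z) \<or> deg_subwing n X Y Z)"

end

theory Submission
  imports Defs "HOL-Number_Theory.Cong"
begin

text \<open>Everything is governed by the cyclic distance r from a to a': Hom((a,b),(a',b')) is at most
one-dimensional, nonzero iff r < b \<le> r + b', and the composite of two basis maps is again a basis
map or zero. Hence a nonzero map between summands of T is irreducible in add T iff its basis map does
not factor through a third summand W. For a subwing (X; Y, Z) such a W would fail to be compatible
with Y or Z, giving (i) and (ii), and the composite Y \<rightarrow> X \<rightarrow> Z lands in the wrong degree, giving (iv).
Conversely rigidity forces an irreducible map to be an inclusion (a,b) \<rightarrow> (a,b') or a quotient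
(a,b) \<rightarrow> (a+r, b-r); the complement of the corresponding wing is then compatible with every summand
of T, so by maximality it belongs to T, giving (iii).\<close>

section \<open>Cyclic distance\<close>

definition cyc_dist :: "nat \<Rightarrow> nat \<Rightarrow> nat \<Rightarrow> nat" where
  "cyc_dist n a u = (u + n - a) mod n"

lemma cyc_dist_eq:
  assumes "a < n" "u < n"
  shows "cyc_dist n a u = (if a \<le> u then u - a else u + n - a)"
proof (cases "a \<le> u")
  case True
  with assms show ?thesis by (simp add: cyc_dist_def le_mod_geq)
qed (use assms in \<open>simp add: cyc_dist_def\<close>)

lemma cyc_dist_less: "0 < n \<Longrightarrow> cyc_dist n a u < n"
  by (simp add: cyc_dist_def)

lemma cyc_dist_self [simp]: "cyc_dist n a a = 0"
  by (simp add: cyc_dist_def)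

lemma cyc_dist_eq_0_iff: "a < n \<Longrightarrow> u < n \<Longrightarrow> cyc_dist n a u = 0 \<longleftrightarrow> u = a"
  by (auto simp: cyc_dist_eq)

lemma cyc_dist_add_mod:
  assumes "a < n" "s < n"
  shows "cyc_dist n a ((a + s) mod n) = s"
proof (cases "a + s < n")
  case False
  with assms have "(a + s) mod n = a + s - n" by (simp add: le_mod_geq)
  with False assms show ?thesis by (simp add: cyc_dist_eq)
qed (use assms in \<open>simp add: cyc_dist_eq\<close>)

lemma mod_add_cyc_dist: "a < n \<Longrightarrow> u < n \<Longrightarrow> (a + cyc_dist n a u) mod n = u"
  by (auto simp: cyc_dist_eq le_mod_geq)

lemma int_cyc_dist_via:
  assumes "a < n" "w < n" "z < n"
  shows "int (cyc_dist n w z) =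
    (if cyc_dist n a w \<le> cyc_dist n a z then int (cyc_dist n a z) - int (cyc_dist n a w)
     else int (cyc_dist n a z) + int n - int (cyc_dist n a w))"
  using assms by (auto simp: cyc_dist_eq of_nat_diff)

lemma cyc_dist_shifts:
  assumes "a < n" "p \<le> r" "r < n"
  shows "cyc_dist n ((a + p) mod n) ((a + r) mod n) = r - p"
proof -
  have "int (cyc_dist n ((a + p) mod n) ((a + r) mod n)) = int r - int p"
    using int_cyc_dist_via[of a n "(a + p) mod n" "(a + r) mod n"] assms
    by (simp add: cyc_dist_add_mod)
  with assms show ?thesis by simp
qed

lemma mod_eq_iff_less_double:
  fixes x y n :: nat
  assumes "x < 2 * n" "y < n"
  shows "x mod n = y \<longleftrightarrow> x = y \<or> x = y + n"
  using assms by (cases "x < n") (auto simp: le_mod_geq)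

section \<open>Hom and Ext between indecomposables\<close>

lemma hom_basis_eq:
  assumes "a < n" "a' < n" "b \<le> n"
  shows "hom_basis n (a,b) (a',b') =
    (if cyc_dist n a a' < b \<and> b \<le> cyc_dist n a a' + b' then {b - 1 - cyc_dist n a a'} else {})"
proof -
  define r where "r = cyc_dist n a a'"
  have r: "r < n" "a' = (a + r) mod n"
    using assms by (simp_all add: r_def cyc_dist_less mod_add_cyc_dist)
  have "j \<in> hom_basis n (a,b) (a',b') \<longleftrightarrow> j = b - 1 - r \<and> r < b \<and> b \<le> r + b'" for j
  proof (cases "j < b")
    case True
    have "(a' + j) mod n = (a + b - 1) mod n \<longleftrightarrow> [a + (r + j) = a + (b - 1)] (mod n)"
      using True by (simp add: r cong_def mod_add_left_eq add.assoc)
    also have "\<dots> \<longleftrightarrow> [r + j = b - 1] (mod n)"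
      by (rule cong_add_lcancel_nat)
    also have "\<dots> \<longleftrightarrow> (r + j) mod n = b - 1"
      using True assms by (simp add: cong_def)
    also have "\<dots> \<longleftrightarrow> r + j = b - 1"
      using True assms r by (subst mod_eq_iff_less_double) auto
    finally show ?thesis using True unfolding hom_basis_def by auto
  qed (auto simp: hom_basis_def)
  then show ?thesis unfolding r_def[symmetric] by auto
qed

lemma tau_eq: "a < n \<Longrightarrow> tau n (a,b) = (if a = 0 then n - 1 else a - 1, b)"
  by (auto simp: tau_def le_mod_geq)

text \<open>With r the cyclic distance from a to a', the two clauses say Hom((a',b'), \<tau>(a,b)) = 0 and
Hom((a,b), \<tau>(a',b')) = 0. The predicate is stated over any ordered semiring so that its combinatorics
can be done over int.\<close>

definition ext_vanishes :: "'a::linordered_semidom \<Rightarrow> 'a \<Rightarrow> 'a \<Rightarrow> 'a \<Rightarrow> bool" where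
  "ext_vanishes n r b b' \<longleftrightarrow> \<not> (n \<le> r + b' \<and> b' + r < n + b) \<and>
     \<not> (if r = 0 then n \<le> b \<and> b < n + b' else r \<le> b \<and> b < r + b')"

lemma ext_vanishes_int_iff:
  "ext_vanishes (int n) (int r) (int b) (int b') \<longleftrightarrow> ext_vanishes n r b b'"
  unfolding ext_vanishes_def
  by (simp only: of_nat_add[symmetric] of_nat_less_iff of_nat_le_iff of_nat_eq_0_iff)

lemma ext1_zero_iff:
  assumes "a < n" "a' < n" "b \<le> n" "b' \<le> n"
  shows "ext1_zero n (a,b) (a',b') \<longleftrightarrow> ext_vanishes n (cyc_dist n a a') b b'"
proof -
  define r where "r = cyc_dist n a a'"
  define ta where "ta = (if a = 0 then n - 1 else a - 1)"
  define ta' where "ta' = (if a' = 0 then n - 1 else a' - 1)"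
  have ta: "ta < n" "ta' < n" using assms by (auto simp: ta_def ta'_def)
  have "cyc_dist n a' ta = n - 1 - r"
    using assms ta unfolding r_def ta_def by (simp add: cyc_dist_eq; arith)
  moreover have "cyc_dist n a ta' = (if r = 0 then n - 1 else r - 1)"
    using assms ta unfolding r_def ta'_def by (simp add: cyc_dist_eq; arith)
  moreover have "r < n" using assms by (simp add: r_def cyc_dist_less)
  ultimately have "hom_basis n (a',b') (tau n (a,b)) = {} \<longleftrightarrow> \<not> (n \<le> r + b' \<and> b' + r < n + b)"
    "hom_basis n (a,b) (tau n (a',b')) = {} \<longleftrightarrow>
       \<not> (if r = 0 then n \<le> b \<and> b < n + b' else r \<le> b \<and> b < r + b')"
    using assms ta
    by (auto simp: tau_eq ta_def[symmetric] ta'_def[symmetric] hom_basis_eq)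
  then show ?thesis
    by (simp add: ext1_zero_def ext_vanishes_def r_def)
qed

section \<open>Summands of a maximal rigid object\<close>

lemma maximal_rigid_ext1_zero:
  "basic_maximal_rigid n T \<Longrightarrow> X \<in> T \<Longrightarrow> Y \<in> T \<Longrightarrow> ext1_zero n X Y"
  unfolding basic_maximal_rigid_def rigid_set_def by blast

lemma maximal_rigid_summand:
  assumes "basic_maximal_rigid n T" "(a,b) \<in> T"
  shows "a < n" "0 < b" "b < n"
proof -
  have "valid_ind n (a,b)"
    using assms unfolding basic_maximal_rigid_def by blast
  then show a: "a < n" and b: "0 < b"
    by (auto simp: valid_ind_def)
  show "b < n"
  proof (rule ccontr)
    assume "\<not> b < n"
    txt \<open>Then (a,b) maps nontrivially onto its own \<tau>-shift.\<close>
    have "((a + n - 1) mod n + (b - n)) mod n = (a + n - 1 + (b - n)) mod n"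
      by (simp add: mod_add_left_eq)
    also have "a + n - 1 + (b - n) = a + b - 1" using \<open>\<not> b < n\<close> a by simp
    finally have "b - n \<in> hom_basis n (a,b) (tau n (a,b))"
      using \<open>\<not> b < n\<close> a unfolding hom_basis_def tau_def by auto
    moreover have "ext1_zero n (a,b) (a,b)"
      using maximal_rigid_ext1_zero[OF assms(1,2,2)] .
    ultimately show False by (auto simp: ext1_zero_def)
  qed
qed

lemma maximal_rigid_ext_vanishes:
  assumes "basic_maximal_rigid n T" "(a,b) \<in> T" "(a',b') \<in> T"
  shows "ext_vanishes n (cyc_dist n a a') b b'"
proof -
  have "ext1_zero n (a,b) (a',b')"
    using maximal_rigid_ext1_zero[OF assms] .
  moreover have "a < n" "b < n" "a' < n" "b' < n"
    using maximal_rigid_summand[OF assms(1)] assms(2,3) by blast+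
  ultimately show ?thesis by (simp add: ext1_zero_iff)
qed

lemma maximal_rigid_memI:
  assumes "basic_maximal_rigid n T" "valid_ind n X" "ext1_zero n X X"
    "\<And>U. U \<in> T \<Longrightarrow> ext1_zero n X U \<and> ext1_zero n U X"
  shows "X \<in> T"
proof -
  have "rigid_set n (insert X T)"
    using assms maximal_rigid_ext1_zero[OF assms(1)] by (auto simp: rigid_set_def)
  with assms show ?thesis unfolding basic_maximal_rigid_def by blast
qed

section \<open>Composites and the radical of add T\<close>

lemma tcomp_eq:
  assumes "a < n" "w < n" "a' < n" "b \<le> n" "v \<le> n"
  defines "s \<equiv> cyc_dist n a w" and "t \<equiv> cyc_dist n w a'"
  shows "tcomp n (a,b) (w,v) (a',b') g h m =
    (if s < b \<and> b \<le> s + v \<and> t < v \<and> v \<le> t + b' \<and> (v - 1 - t) + (b - 1 - s) + 1 = v + m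
     then h (b - 1 - s) * g (v - 1 - t) else 0)"
proof -
  have "hom_basis n (a,b) (w,v) = (if s < b \<and> b \<le> s + v then {b - 1 - s} else {})"
    "hom_basis n (w,v) (a',b') = (if t < v \<and> v \<le> t + b' then {v - 1 - t} else {})"
    using assms by (simp_all add: hom_basis_eq)
  then show ?thesis
    unfolding tcomp_def by auto
qed

text \<open>When Hom(X,Y) \<noteq> 0 this says that the basis map X \<rightarrow> Y is the composite of the basis maps
X \<rightarrow> W \<rightarrow> Y; otherwise that composite is zero.\<close>

definition factors_via :: "nat \<Rightarrow> ind \<Rightarrow> ind \<Rightarrow> ind \<Rightarrow> bool" where
  "factors_via n X W Y \<longleftrightarrow> hom_basis n X W \<noteq> {} \<and> hom_basis n W Y \<noteq> {} \<and>
     cyc_dist n (fst X) (fst W) + cyc_dist n (fst W) (fst Y) = cyc_dist n (fst X) (fst Y)"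

lemma factors_via_iff:
  assumes "a < n" "w < n" "a' < n" "b \<le> n" "v \<le> n"
  shows "factors_via n (a,b) (w,v) (a',b') \<longleftrightarrow>
    cyc_dist n a w < b \<and> b \<le> cyc_dist n a w + v \<and> cyc_dist n w a' < v \<and> v \<le> cyc_dist n w a' + b' \<and>
    cyc_dist n a w + cyc_dist n w a' = cyc_dist n a a'"
  using assms by (auto simp: factors_via_def hom_basis_eq)

lemma tcomp_at_basis_index:
  assumes "a < n" "w < n" "a' < n" "b \<le> n" "v \<le> n" "cyc_dist n a a' < b"
  shows "tcomp n (a,b) (w,v) (a',b') g h (b - 1 - cyc_dist n a a') =
    (if factors_via n (a,b) (w,v) (a',b')
     then h (b - 1 - cyc_dist n a w) * g (v - 1 - cyc_dist n w a') else 0)"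
proof -
  define s where "s = cyc_dist n a w"
  define t where "t = cyc_dist n w a'"
  have "(v - 1 - t) + (b - 1 - s) + 1 = v + (b - 1 - cyc_dist n a a') \<longleftrightarrow> s + t = cyc_dist n a a'"
    if "s < b" "t < v"
    using that assms(6) by arith
  then show ?thesis
    using assms unfolding tcomp_eq[OF assms(1-5)] factors_via_iff[OF assms(1-5)] s_def[symmetric]
      t_def[symmetric]
    by auto
qed

lemma trad2_if_factors_via:
  fixes x :: "'k::field"
  assumes mr: "basic_maximal_rigid n T"
    and X: "(a,b) \<in> T" and Y: "(a',b') \<in> T" and W: "(w,v) \<in> T"
    and "(w,v) \<noteq> (a,b)" "(w,v) \<noteq> (a',b')" "factors_via n (a,b) (w,v) (a',b')"
    and r: "cyc_dist n a a' < b"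
  shows "trad2 n T (a,b) (a',b') (\<lambda>i. if i = b - 1 - cyc_dist n a a' then x else 0)"
proof -
  have bounds: "a < n" "b < n" "a' < n" "b' < n" "w < n" "v < n"
    using maximal_rigid_summand[OF mr] X Y W by blast+
  define s where "s = cyc_dist n a w"
  define t where "t = cyc_dist n w a'"
  define h where "h = (\<lambda>i. if i = b - 1 - s then x else 0)"
  define g where "g = (\<lambda>i. if i = v - 1 - t then 1 else (0::'k))"
  have fv: "s < b" "b \<le> s + v" "t < v" "v \<le> t + b'" "s + t = cyc_dist n a a'"
    using assms bounds by (simp_all add: factors_via_iff s_def t_def)
  have "trad n (a,b) (w,v) h" "trad n (w,v) (a',b') g"
    using assms bounds fv by (auto simp: trad_def tmap_def hom_basis_eq h_def g_def s_def t_def)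
  moreover have "(\<lambda>i. if i = b - 1 - cyc_dist n a a' then x else 0) = tcomp n (a,b) (w,v) (a',b') g h"
  proof
    fix i
    have "(v - 1 - t) + (b - 1 - s) + 1 = v + i \<longleftrightarrow> i = b - 1 - cyc_dist n a a'"
      using fv r by arith
    then show "(if i = b - 1 - cyc_dist n a a' then x else 0) = tcomp n (a,b) (w,v) (a',b') g h i"
      using fv bounds by (simp add: tcomp_eq h_def g_def s_def[symmetric] t_def[symmetric])
  qed
  ultimately show ?thesis
    unfolding trad2_def using W
    by (intro exI[of _ "1::nat"] exI[of _ "\<lambda>_. (w,v)"] exI[of _ "\<lambda>_. h"] exI[of _ "\<lambda>_. g"]) auto
qed

lemma not_trad2_if_composites_vanish:
  fixes f :: "nat \<Rightarrow> 'k::field"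
  assumes "f d \<noteq> 0"
    and "\<And>W h g. W \<in> T \<Longrightarrow> trad n X W h \<Longrightarrow> trad n W Y g \<Longrightarrow> tcomp n X W Y g h d = (0::'k)"
  shows "\<not> trad2 n T X Y f"
proof
  assume "trad2 n T X Y f"
  then obtain m :: nat and Zs hs gs
    where comps: "\<forall>t<m. Zs t \<in> T \<and> trad n X (Zs t) (hs t) \<and> trad n (Zs t) Y (gs t)"
      and f: "f = (\<lambda>i. \<Sum>t<m. tcomp n X (Zs t) Y (gs t) (hs t) i)"
    unfolding trad2_def by blast
  have "f d = (\<Sum>t<m. tcomp n X (Zs t) Y (gs t) (hs t) d)" using f by simp
  also have "\<dots> = 0"
    using comps by (intro sum.neutral ballI assms(2)) auto
  finally show False using assms(1) by simp
qed

text \<open>The arrows of the quiver of add T: irreducible maps are, up to a scalar, exactly the basis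
maps along these arrows.\<close>

definition T_arrow :: "nat \<Rightarrow> ind set \<Rightarrow> ind \<Rightarrow> ind \<Rightarrow> bool" where
  "T_arrow n T X Y \<longleftrightarrow> X \<in> T \<and> Y \<in> T \<and> X \<noteq> Y \<and> hom_basis n X Y \<noteq> {} \<and>
     (\<forall>W\<in>T. factors_via n X W Y \<longrightarrow> W = X \<or> W = Y)"

lemma irreducible_addT_basis_map:
  fixes x :: "'k::field"
  assumes mr: "basic_maximal_rigid n T" and arrow: "T_arrow n T (a,b) (a',b')" and "x \<noteq> 0"
  shows "irreducible_addT n T (a,b) (a',b') (\<lambda>i. if i = b - 1 - cyc_dist n a a' then x else 0)"
    (is "irreducible_addT n T ?X ?Y ?f")
proof -
  define d where "d = b - 1 - cyc_dist n a a'"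
  have inT: "?X \<in> T" "?Y \<in> T" and "?X \<noteq> ?Y"
    using arrow by (auto simp: T_arrow_def)
  have bounds: "a < n" "b < n" "a' < n" "b' < n"
    using maximal_rigid_summand[OF mr] inT by blast+
  then have hom: "hom_basis n ?X ?Y = {d}" and r: "cyc_dist n a a' < b"
    using arrow by (auto simp: T_arrow_def hom_basis_eq d_def split: if_splits)
  have "trad n ?X ?Y ?f"
    using \<open>?X \<noteq> ?Y\<close> hom by (simp add: trad_def tmap_def d_def)
  moreover have "tcomp n ?X W ?Y g h d = 0"
    if "W \<in> T" "trad n ?X W h" "trad n W ?Y g" for W and h g :: "nat \<Rightarrow> 'k"
  proof -
    obtain w v where W: "W = (w,v)" by fastforce
    have wv: "w < n" "v < n" using maximal_rigid_summand[OF mr] that(1) W by blast+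
    have val: "tcomp n ?X W ?Y g h d =
      (if factors_via n ?X W ?Y then h (b - 1 - cyc_dist n a w) * g (v - 1 - cyc_dist n w a') else 0)"
      unfolding W d_def by (rule tcomp_at_basis_index) (use bounds r wv in auto)
    show ?thesis
    proof (cases "factors_via n ?X W ?Y")
      case True
      txt \<open>Then one factor is a radical endomorphism, evaluated at its identity coefficient.\<close>
      then have "W = ?X \<or> W = ?Y" using arrow \<open>W \<in> T\<close> by (auto simp: T_arrow_def)
      then show ?thesis
        using val that(2,3) by (auto simp: W trad_def)
    qed (simp add: val)
  qed
  then have "\<not> trad2 n T ?X ?Y ?f"
    using \<open>x \<noteq> 0\<close> by (intro not_trad2_if_composites_vanish[where d = d]) (simp_all add: d_def)
  ultimately show ?thesis
    using inT by (simp add: irreducible_addT_def)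
qed

lemma T_arrow_irreducible_map:
  assumes "basic_maximal_rigid n T" "T_arrow n T X Y"
  shows "\<exists>f :: nat \<Rightarrow> 'k::field. tmap n X Y f \<and> f \<noteq> (\<lambda>_. 0) \<and> irreducible_addT n T X Y f"
proof -
  obtain a b a' b' where XY: "X = (a,b)" "Y = (a',b')" by fastforce
  define f :: "nat \<Rightarrow> 'k" where "f = (\<lambda>i. if i = b - 1 - cyc_dist n a a' then 1 else 0)"
  have "irreducible_addT n T X Y f"
    using irreducible_addT_basis_map[OF assms(1), of a b a' b' 1] assms(2) by (simp add: XY f_def)
  moreover have "f \<noteq> (\<lambda>_. 0)"
    by (auto simp: f_def fun_eq_iff)
  ultimately show ?thesis
    by (auto simp: irreducible_addT_def trad_def)
qed

lemma irreducible_addT_imp_T_arrow: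
  assumes mr: "basic_maximal_rigid n T" and irr: "irreducible_addT n T X Y f"
  shows "T_arrow n T X Y"
proof -
  obtain a b a' b' where XY: "X = (a,b)" "Y = (a',b')" by fastforce
  define r where "r = cyc_dist n a a'"
  have inT: "(a,b) \<in> T" "(a',b') \<in> T" and tm: "tmap n X Y f"
    and rad: "X \<noteq> Y \<or> f (b - 1) = 0" and not_rad2: "\<not> trad2 n T X Y f"
    using irr by (auto simp: irreducible_addT_def trad_def XY)
  have bounds: "a < n" "b < n" "a' < n" "b' < n"
    using maximal_rigid_summand[OF mr] inT by blast+
  have "f \<noteq> (\<lambda>_. 0)"
  proof
    assume "f = (\<lambda>_. 0)"
    then have "trad2 n T X Y f"
      unfolding trad2_def by (intro exI[of _ "0::nat"]) simp
    with not_rad2 show False ..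
  qed
  then obtain j where "f j \<noteq> 0" by auto
  with tm have j: "j \<in> hom_basis n X Y" by (auto simp: tmap_def)
  then have hom: "hom_basis n X Y = {j}" and jr: "j = b - 1 - r" "r < b"
    using bounds by (auto simp: XY hom_basis_eq r_def split: if_splits)
  have f: "f = (\<lambda>i. if i = b - 1 - r then f j else 0)"
    using tm hom jr by (auto simp: tmap_def)
  have "X \<noteq> Y"
    using rad \<open>f j \<noteq> 0\<close> jr by (auto simp: XY r_def)
  moreover have "W = X \<or> W = Y" if "W \<in> T" "factors_via n X W Y" for W
  proof (rule ccontr)
    assume "\<not> (W = X \<or> W = Y)"
    moreover obtain w v where W: "W = (w,v)" by fastforce
    ultimately have "trad2 n T X Y (\<lambda>i. if i = b - 1 - r then f j else 0)"
      unfolding XY r_def by (intro trad2_if_factors_via[OF mr inT]) (use that jr XY W r_def in auto)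
    with not_rad2 f show False by simp
  qed
  ultimately show ?thesis
    using inT j by (auto simp: T_arrow_def XY)
qed

lemma factors_via_inclusion_iff:
  assumes "a < n" "w < n" "c \<le> n" "v \<le> n" "0 < c"
  shows "factors_via n (a,c) (w,v) (a,b) \<longleftrightarrow> w = a \<and> c \<le> v \<and> v \<le> b"
  unfolding factors_via_iff[OF assms(1,2,1,3,4)] using assms by (auto simp: cyc_dist_eq_0_iff)

lemma factors_via_quotient_iff:
  assumes "a < n" "w < n" "v \<le> n" "r < b" "b \<le> n"
  shows "factors_via n (a,b) (w,v) ((a + r) mod n, b - r) \<longleftrightarrow>
    (\<exists>p\<le>r. w = (a + p) mod n \<and> v = b - p)"
proof
  assume fv: "factors_via n (a,b) (w,v) ((a + r) mod n, b - r)"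
  define p where "p = cyc_dist n a w"
  have "p + cyc_dist n w ((a + r) mod n) = r" "b \<le> p + v" "v \<le> cyc_dist n w ((a + r) mod n) + (b - r)"
    using fv assms by (simp_all add: factors_via_iff cyc_dist_add_mod p_def)
  then have "p \<le> r" "v = b - p" using assms(4) by auto
  moreover have "w = (a + p) mod n"
    using assms by (simp add: p_def mod_add_cyc_dist)
  ultimately show "\<exists>p\<le>r. w = (a + p) mod n \<and> v = b - p" by blast
next
  assume "\<exists>p\<le>r. w = (a + p) mod n \<and> v = b - p"
  then obtain p where "p \<le> r" "w = (a + p) mod n" "v = b - p" by blast
  with assms show "factors_via n (a,b) (w,v) ((a + r) mod n, b - r)"
    by (simp add: factors_via_iff cyc_dist_add_mod cyc_dist_shifts)
qed

lemma T_arrow_inclusion_iff: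
  assumes mr: "basic_maximal_rigid n T" and "(a,c) \<in> T" "(a,b) \<in> T" "c < b"
  shows "T_arrow n T (a,c) (a,b) \<longleftrightarrow> (\<forall>v. c < v \<and> v < b \<longrightarrow> (a,v) \<notin> T)"
proof -
  have bounds: "a < n" "0 < c" "b < n"
    using maximal_rigid_summand[OF mr] assms(2,3) by blast+
  have "factors_via n (a,c) (w,v) (a,b) \<longleftrightarrow> w = a \<and> c \<le> v \<and> v \<le> b" if "(w,v) \<in> T" for w v
    using that bounds assms(4) maximal_rigid_summand[OF mr that]
    by (simp add: factors_via_inclusion_iff)
  moreover have "hom_basis n (a,c) (a,b) \<noteq> {}"
    using assms bounds by (simp add: hom_basis_eq)
  ultimately show ?thesis
    using assms by (auto simp: T_arrow_def le_less)
qed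

lemma T_arrow_quotient_iff:
  assumes mr: "basic_maximal_rigid n T" and X: "(a,b) \<in> T" and Y: "((a + r) mod n, b - r) \<in> T"
    and "0 < r" "r < b"
  shows "T_arrow n T (a,b) ((a + r) mod n, b - r) \<longleftrightarrow>
    (\<forall>p. 0 < p \<and> p < r \<longrightarrow> ((a + p) mod n, b - p) \<notin> T)"
proof -
  have bounds: "a < n" "b < n"
    using maximal_rigid_summand[OF mr X] by blast+
  have fv: "factors_via n (a,b) (w,v) ((a + r) mod n, b - r) \<longleftrightarrow>
      (\<exists>p\<le>r. (w,v) = ((a + p) mod n, b - p))" if "(w,v) \<in> T" for w v
    using that bounds assms(5) maximal_rigid_summand[OF mr that]
    by (simp add: factors_via_quotient_iff)
  have ends: "((a + p) mod n, b - p) = (a,b) \<longleftrightarrow> p = 0"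
    "((a + p) mod n, b - p) = ((a + r) mod n, b - r) \<longleftrightarrow> p = r" if "p \<le> r" for p
    using that assms(5) bounds by auto
  have "(\<forall>W\<in>T. factors_via n (a,b) W ((a + r) mod n, b - r) \<longrightarrow>
        W = (a,b) \<or> W = ((a + r) mod n, b - r)) \<longleftrightarrow>
      (\<forall>p\<le>r. ((a + p) mod n, b - p) \<in> T \<longrightarrow> p = 0 \<or> p = r)"
    using fv ends by fastforce
  moreover have "hom_basis n (a,b) ((a + r) mod n, b - r) \<noteq> {}"
    using assms bounds by (simp add: hom_basis_eq cyc_dist_add_mod)
  ultimately show ?thesis
    using X Y assms(4,5) by (auto simp: T_arrow_def le_less)
qed

section \<open>Subwings\<close>

lemma T_subwing_arrow_left:
  assumes mr: "basic_maximal_rigid n T" and sw: "T_subwing n T X (Some Y) Z"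
  shows "T_arrow n T Y X"
proof -
  obtain a b c where X: "X = (a,b)" and Y: "Y = (a,c)" and "c < b"
    and gap: "\<And>v. c < v \<Longrightarrow> v < b \<Longrightarrow> (a,v) \<notin> T"
  proof (cases "\<exists>z. Z = Some z")
    case True
    then obtain a b c where "X = (a,b)" "Y = (a,c)" "1 \<le> c" "c + 2 \<le> b"
      and Z: "((a + c + 1) mod n, b - c - 1) \<in> T"
      using sw by (auto simp: T_subwing_def nondeg_subwing_def deg_subwing_def)
    moreover have "(a,v) \<notin> T" if "c < v" "v < b" for v
    proof
      assume "(a,v) \<in> T"
      txt \<open>Then Hom((a,v), \<tau> Z) \<noteq> 0.\<close>
      have "a < n" "b < n" using maximal_rigid_summand[OF mr] sw \<open>X = (a,b)\<close>
        by (auto simp: T_subwing_def)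
      then have "cyc_dist n a ((a + c + 1) mod n) = c + 1"
        using cyc_dist_add_mod[of a n "c + 1"] \<open>c + 2 \<le> b\<close> by (simp add: add.assoc)
      then show False
        using maximal_rigid_ext_vanishes[OF mr \<open>(a,v) \<in> T\<close> Z] that
        by (simp add: ext_vanishes_def)
    qed
    ultimately show ?thesis using that by simp
  next
    case False
    then obtain a b where "X = (a,b)" "Y = (a, b - 1)" "2 \<le> b"
      using sw by (auto simp: T_subwing_def deg_subwing_def)
    with that show ?thesis by simp
  qed
  have "X \<in> T" "Y \<in> T" using sw by (auto simp: T_subwing_def)
  with gap \<open>c < b\<close> show ?thesis
    unfolding X Y by (simp add: T_arrow_inclusion_iff[OF mr])
qed

lemma T_subwing_arrow_right:
  assumes mr: "basic_maximal_rigid n T" and sw: "T_subwing n T X Y (Some Z)"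
  shows "T_arrow n T X Z"
proof -
  obtain a b r where X: "X = (a,b)" and Z: "Z = ((a + r) mod n, b - r)" and "0 < r" "r < b"
    and gap: "\<And>p. 0 < p \<Longrightarrow> p < r \<Longrightarrow> ((a + p) mod n, b - p) \<notin> T"
  proof (cases "\<exists>y. Y = Some y")
    case True
    then obtain a b c where X: "X = (a,b)" and Z: "Z = ((a + (c + 1)) mod n, b - (c + 1))"
      and "1 \<le> c" "c + 2 \<le> b" and Y: "(a,c) \<in> T"
      using sw by (auto simp: T_subwing_def nondeg_subwing_def deg_subwing_def add.assoc)
    moreover have "((a + p) mod n, b - p) \<notin> T" if "0 < p" "p < c + 1" for p
    proof
      assume W: "((a + p) mod n, b - p) \<in> T"
      txt \<open>Then Hom(Y, \<tau> W) \<noteq> 0.\<close>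
      have "a < n" "b < n" using maximal_rigid_summand[OF mr] sw \<open>X = (a,b)\<close>
        by (auto simp: T_subwing_def)
      then have "cyc_dist n a ((a + p) mod n) = p"
        using that \<open>c + 2 \<le> b\<close> by (simp add: cyc_dist_add_mod)
      then show False
        using maximal_rigid_ext_vanishes[OF mr Y W] that \<open>c + 2 \<le> b\<close>
        by (simp add: ext_vanishes_def)
    qed
    then show ?thesis
      using X Z \<open>c + 2 \<le> b\<close> by (intro that[of a b "c + 1"]) simp_all
  next
    case False
    then obtain a b where "X = (a,b)" "Z = ((a + 1) mod n, b - 1)" "2 \<le> b"
      using sw by (auto simp: T_subwing_def deg_subwing_def)
    then show ?thesis by (intro that[of a b 1]) simp_all
  qed
  have "X \<in> T" "Z \<in> T" using sw by (auto simp: T_subwing_def)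
  with gap \<open>0 < r\<close> \<open>r < b\<close> show ?thesis
    unfolding X Z by (simp add: T_arrow_quotient_iff[OF mr])
qed

lemma T_subwing_comp_eq_0:
  assumes "T_subwing n T X (Some Y) (Some Z)"
  shows "tcomp n Y X Z g f = (\<lambda>_. 0)"
proof
  fix m
  obtain a b c where "X = (a,b)" "Y = (a,c)" "Z = ((a + (c + 1)) mod n, b - c - 1)"
    "a < n" "b \<le> n" "1 \<le> c" "c + 2 \<le> b"
    using assms by (auto simp: T_subwing_def nondeg_subwing_def deg_subwing_def add.assoc)
  moreover have "cyc_dist n a ((a + (c + 1)) mod n) = c + 1"
    using calculation cyc_dist_add_mod[of a n "c + 1"] by simp
  moreover have "(b - 1 - (c + 1)) + (c - 1 - 0) + 1 \<noteq> b + m"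
    using \<open>1 \<le> c\<close> \<open>c + 2 \<le> b\<close> by arith
  ultimately show "tcomp n Y X Z g f m = 0"
    by (simp add: tcomp_eq)
qed

text \<open>A summand U compatible with two members of a wing, and not strictly inside it, is compatible
with the third. In the next two lemmas the wing is X = (a, b+1+e), Y = (a, b), Z = (a+b+1, e),
resp. X = (a, r+e), Y = (a, r-1), Z = (a+r, e); U has quasilength v and lies at cyclic distance p
from a, and the if-expressions are the cyclic distances between U and the other vertices.\<close>

lemma ext_vanishes_wing_Z:
  fixes n b e p v :: int
  assumes "0 < b" "0 < e" "b + 1 + e < n" "0 \<le> p" "p < n" "0 < v" "v < n"
    "ext_vanishes n p b v" "ext_vanishes n (if p = 0 then 0 else n - p) v b"
    "ext_vanishes n p (b + 1 + e) v" "ext_vanishes n (if p = 0 then 0 else n - p) v (b + 1 + e)"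
    "\<not> (p = 0 \<and> b < v \<and> v < b + 1 + e)"
  shows "ext_vanishes n (if b + 1 \<le> p then p - (b + 1) else p + n - (b + 1)) e v \<and>
         ext_vanishes n (if p \<le> b + 1 then b + 1 - p else b + 1 + n - p) v e"
  using assms unfolding ext_vanishes_def by (smt (z3))

lemma ext_vanishes_wing_Y:
  fixes n r e p v :: int
  assumes "1 < r" "0 < e" "r + e < n" "0 \<le> p" "p < n" "0 < v" "v < n"
    "ext_vanishes n p (r + e) v" "ext_vanishes n (if p = 0 then 0 else n - p) v (r + e)"
    "ext_vanishes n (if r \<le> p then p - r else p + n - r) e v"
    "ext_vanishes n (if p \<le> r then r - p else r + n - p) v e"
    "\<not> (0 < p \<and> p < r \<and> v + p = r + e)"
  shows "ext_vanishes n p (r - 1) v \<and> ext_vanishes n (if p = 0 then 0 else n - p) v (r - 1)"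
  using assms unfolding ext_vanishes_def by (smt (z3))

lemma maximal_rigid_wing_Z_ext1_zero:
  assumes mr: "basic_maximal_rigid n T" and Y: "(a,b) \<in> T" and X: "(a,b') \<in> T"
    and "b + 2 \<le> b'" and gap: "\<And>v. b < v \<Longrightarrow> v < b' \<Longrightarrow> (a,v) \<notin> T" and U: "(u,v) \<in> T"
  shows "ext1_zero n ((a + b + 1) mod n, b' - b - 1) (u,v) \<and>
    ext1_zero n (u,v) ((a + b + 1) mod n, b' - b - 1)"
proof -
  define z where "z = (a + b + 1) mod n"
  define e where "e = b' - b - 1"
  define p where "p = cyc_dist n a u"
  have bounds: "a < n" "0 < b" "b' < n" "u < n" "0 < v" "v < n"
    using maximal_rigid_summand[OF mr] X Y U by blast+
  have z: "z < n" "cyc_dist n a z = b + 1"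
    using bounds \<open>b + 2 \<le> b'\<close> cyc_dist_add_mod[of a n "b + 1"] by (simp_all add: z_def)
  have b': "int b' = int b + 1 + int e" and e: "e < n"
    using bounds \<open>b + 2 \<le> b'\<close> by (simp_all add: e_def)
  have dists: "int (cyc_dist n u a) = (if int p = 0 then 0 else int n - int p)"
    "int (cyc_dist n z u) =
      (if int b + 1 \<le> int p then int p - (int b + 1) else int p + int n - (int b + 1))"
    "int (cyc_dist n u z) =
      (if int p \<le> int b + 1 then int b + 1 - int p else int b + 1 + int n - int p)"
    using int_cyc_dist_via[of a n u a] int_cyc_dist_via[of a n z u] int_cyc_dist_via[of a n u z]
      bounds z by (auto simp: p_def)
  have between: "\<not> (int p = 0 \<and> int b < int v \<and> int v < int b + 1 + int e)"
    using gap[of v] U bounds b' by (auto simp: p_def cyc_dist_eq_0_iff)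
  have num: "0 < int b" "0 < int e" "int b + 1 + int e < int n" "0 \<le> int p" "int p < int n"
    "0 < int v" "int v < int n"
    using bounds \<open>b + 2 \<le> b'\<close> b' cyc_dist_less[of n a u] by (simp_all add: p_def e_def)
  have "ext_vanishes (int n) (int p) (int b) (int v)"
    "ext_vanishes (int n) (if int p = 0 then 0 else int n - int p) (int v) (int b)"
    "ext_vanishes (int n) (int p) (int b + 1 + int e) (int v)"
    "ext_vanishes (int n) (if int p = 0 then 0 else int n - int p) (int v) (int b + 1 + int e)"
    unfolding dists(1)[symmetric] b'[symmetric] ext_vanishes_int_iff
    using maximal_rigid_ext_vanishes[OF mr Y U] maximal_rigid_ext_vanishes[OF mr U Y]
      maximal_rigid_ext_vanishes[OF mr X U] maximal_rigid_ext_vanishes[OF mr U X]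
    by (simp_all add: p_def)
  note ext_vanishes_wing_Z[OF num this between, folded dists(2,3), unfolded ext_vanishes_int_iff]
  then show ?thesis
    unfolding z_def[symmetric] e_def[symmetric] using bounds z e by (simp add: ext1_zero_iff)
qed

lemma maximal_rigid_wing_Z_mem:
  assumes mr: "basic_maximal_rigid n T" and Y: "(a,b) \<in> T" and X: "(a,b') \<in> T"
    and "b + 2 \<le> b'" and gap: "\<And>v. b < v \<Longrightarrow> v < b' \<Longrightarrow> (a,v) \<notin> T"
  shows "((a + b + 1) mod n, b' - b - 1) \<in> T"
proof (rule maximal_rigid_memI[OF mr])
  have "a < n" "b' < n"
    using maximal_rigid_summand[OF mr] X by blast+
  with \<open>b + 2 \<le> b'\<close> show "valid_ind n ((a + b + 1) mod n, b' - b - 1)"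
    "ext1_zero n ((a + b + 1) mod n, b' - b - 1) ((a + b + 1) mod n, b' - b - 1)"
    by (simp_all add: valid_ind_def ext1_zero_iff ext_vanishes_def)
  show "ext1_zero n ((a + b + 1) mod n, b' - b - 1) U \<and> ext1_zero n U ((a + b + 1) mod n, b' - b - 1)"
    if "U \<in> T" for U
    using that maximal_rigid_wing_Z_ext1_zero[OF assms] by (cases U) blast
qed

lemma maximal_rigid_wing_Y_ext1_zero:
  assumes mr: "basic_maximal_rigid n T" and X: "(a,b) \<in> T" and Z: "((a + r) mod n, b - r) \<in> T"
    and "1 < r" "r < b" and gap: "\<And>p. 0 < p \<Longrightarrow> p < r \<Longrightarrow> ((a + p) mod n, b - p) \<notin> T"
    and U: "(u,v) \<in> T"
  shows "ext1_zero n (a, r - 1) (u,v) \<and> ext1_zero n (u,v) (a, r - 1)"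
proof -
  define z where "z = (a + r) mod n"
  define e where "e = b - r"
  define p where "p = cyc_dist n a u"
  have bounds: "a < n" "b < n" "u < n" "0 < v" "v < n"
    using maximal_rigid_summand[OF mr] X U by blast+
  have z: "z < n" "cyc_dist n a z = r"
    using bounds \<open>r < b\<close> by (simp_all add: z_def cyc_dist_add_mod)
  have b: "int b = int r + int e" and r1: "int (r - 1) = int r - 1"
    using \<open>1 < r\<close> \<open>r < b\<close> by (simp_all add: e_def of_nat_diff)
  have dists: "int (cyc_dist n u a) = (if int p = 0 then 0 else int n - int p)"
    "int (cyc_dist n z u) = (if int r \<le> int p then int p - int r else int p + int n - int r)"
    "int (cyc_dist n u z) = (if int p \<le> int r then int r - int p else int r + int n - int p)"
    using int_cyc_dist_via[of a n u a] int_cyc_dist_via[of a n z u] int_cyc_dist_via[of a n u z]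
      bounds z by (auto simp: p_def)
  have "(u,v) \<noteq> ((a + p) mod n, b - p)" if "0 < p" "p < r"
    using gap[OF that] U by auto
  then have between: "\<not> (0 < int p \<and> int p < int r \<and> int v + int p = int r + int e)"
    using bounds b \<open>r < b\<close> by (auto simp: p_def mod_add_cyc_dist)
  have num: "1 < int r" "0 < int e" "int r + int e < int n" "0 \<le> int p" "int p < int n"
    "0 < int v" "int v < int n"
    using bounds b \<open>1 < r\<close> \<open>r < b\<close> cyc_dist_less[of n a u] by (simp_all add: p_def e_def)
  have "ext_vanishes (int n) (int p) (int r + int e) (int v)"
    "ext_vanishes (int n) (if int p = 0 then 0 else int n - int p) (int v) (int r + int e)"
    "ext_vanishes (int n) (if int r \<le> int p then int p - int r else int p + int n - int r) (int e) (int v)"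
    "ext_vanishes (int n) (if int p \<le> int r then int r - int p else int r + int n - int p) (int v) (int e)"
    unfolding dists[symmetric] b[symmetric] ext_vanishes_int_iff
    using maximal_rigid_ext_vanishes[OF mr X U] maximal_rigid_ext_vanishes[OF mr U X]
      maximal_rigid_ext_vanishes[OF mr Z U] maximal_rigid_ext_vanishes[OF mr U Z]
    by (simp_all add: p_def z_def e_def)
  note ext_vanishes_wing_Y[OF num this between, folded dists(1) r1, unfolded ext_vanishes_int_iff]
  then show ?thesis
    using bounds \<open>r < b\<close> by (simp add: ext1_zero_iff p_def)
qed

lemma maximal_rigid_wing_Y_mem:
  assumes mr: "basic_maximal_rigid n T" and X: "(a,b) \<in> T" and Z: "((a + r) mod n, b - r) \<in> T"
    and "1 < r" "r < b" and gap: "\<And>p. 0 < p \<Longrightarrow> p < r \<Longrightarrow> ((a + p) mod n, b - p) \<notin> T"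
  shows "(a, r - 1) \<in> T"
proof (rule maximal_rigid_memI[OF mr])
  have "a < n" "b < n"
    using maximal_rigid_summand[OF mr X] by blast+
  with \<open>1 < r\<close> \<open>r < b\<close> show "valid_ind n (a, r - 1)" "ext1_zero n (a, r - 1) (a, r - 1)"
    by (simp_all add: valid_ind_def ext1_zero_iff ext_vanishes_def)
  show "ext1_zero n (a, r - 1) U \<and> ext1_zero n U (a, r - 1)" if "U \<in> T" for U
    using that maximal_rigid_wing_Y_ext1_zero[OF assms] by (cases U) blast
qed

lemma T_arrow_shape:
  assumes mr: "basic_maximal_rigid n T" and arrow: "T_arrow n T (a,b) (a',b')"
  shows "a' = a \<and> b < b' \<or> (\<exists>r. 0 < r \<and> r < b \<and> a' = (a + r) mod n \<and> b' = b - r)"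
proof -
  define r where "r = cyc_dist n a a'"
  have inT: "(a,b) \<in> T" "(a',b') \<in> T" and "(a,b) \<noteq> (a',b')" "hom_basis n (a,b) (a',b') \<noteq> {}"
    using arrow by (auto simp: T_arrow_def)
  have bounds: "a < n" "b < n" "a' < n" "b' < n"
    using maximal_rigid_summand[OF mr] inT by blast+
  have hom: "r < b" "b \<le> r + b'"
    using \<open>hom_basis n (a,b) (a',b') \<noteq> {}\<close> bounds by (auto simp: r_def hom_basis_eq split: if_splits)
  have "ext_vanishes n r b b'"
    using maximal_rigid_ext_vanishes[OF mr inT] by (simp add: r_def)
  with hom have "r = 0 \<or> b = r + b'"
    by (cases "r = 0") (auto simp: ext_vanishes_def)
  then show ?thesis
  proof
    assume "r = 0"
    then show ?thesis
      using \<open>(a,b) \<noteq> (a',b')\<close> hom bounds by (auto simp: r_def cyc_dist_eq_0_iff)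
  next
    assume "b = r + b'"
    moreover from this have "0 < r"
      using \<open>(a,b) \<noteq> (a',b')\<close> bounds cyc_dist_eq_0_iff[of a n a'] by (auto simp: r_def)
    ultimately show ?thesis
      using hom bounds by (intro disjI2 exI[of _ r]) (auto simp: r_def mod_add_cyc_dist)
  qed
qed

lemma T_arrow_inclusion_imp_T_subwing:
  assumes mr: "basic_maximal_rigid n T" and arrow: "T_arrow n T (a,b) (a,b')" and "b < b'"
  shows "\<exists>W. T_subwing n T (a,b') (Some (a,b)) W"
proof -
  have inT: "(a,b) \<in> T" "(a,b') \<in> T"
    using arrow by (auto simp: T_arrow_def)
  have bounds: "a < n" "0 < b" "b' < n"
    using maximal_rigid_summand[OF mr] inT by blast+
  show ?thesis
  proof (cases "b' = b + 1")
    case True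
    then have "T_subwing n T (a,b') (Some (a,b)) None"
      using inT bounds by (auto simp: T_subwing_def deg_subwing_def)
    then show ?thesis by blast
  next
    case False
    have "((a + b + 1) mod n, b' - b - 1) \<in> T"
      using T_arrow_inclusion_iff[OF mr inT \<open>b < b'\<close>] arrow \<open>b < b'\<close> False
      by (intro maximal_rigid_wing_Z_mem[OF mr inT]) auto
    then have "T_subwing n T (a,b') (Some (a,b)) (Some ((a + b + 1) mod n, b' - b - 1))"
      using inT bounds \<open>b < b'\<close> False by (auto simp: T_subwing_def nondeg_subwing_def)
    then show ?thesis by blast
  qed
qed

lemma T_arrow_quotient_imp_T_subwing:
  assumes mr: "basic_maximal_rigid n T" and arrow: "T_arrow n T (a,b) ((a + r) mod n, b - r)"
    and "0 < r" "r < b"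
  shows "\<exists>W. T_subwing n T (a,b) W (Some ((a + r) mod n, b - r))"
proof -
  have inT: "(a,b) \<in> T" "((a + r) mod n, b - r) \<in> T"
    using arrow by (auto simp: T_arrow_def)
  have bounds: "a < n" "b < n"
    using maximal_rigid_summand[OF mr] inT by blast+
  show ?thesis
  proof (cases "r = 1")
    case True
    then have "T_subwing n T (a,b) None (Some ((a + r) mod n, b - r))"
      using inT bounds \<open>r < b\<close> by (auto simp: T_subwing_def deg_subwing_def)
    then show ?thesis by blast
  next
    case False
    have "(a, r - 1) \<in> T"
      using T_arrow_quotient_iff[OF mr inT assms(3,4)] arrow assms(3,4) False
      by (intro maximal_rigid_wing_Y_mem[OF mr inT]) auto
    then have "T_subwing n T (a,b) (Some (a, r - 1)) (Some ((a + r) mod n, b - r))"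
      using inT bounds assms(3,4) False by (auto simp: T_subwing_def nondeg_subwing_def)
    then show ?thesis by blast
  qed
qed

lemma T_arrow_imp_T_subwing:
  assumes mr: "basic_maximal_rigid n T" and arrow: "T_arrow n T A B"
  shows "(\<exists>W. T_subwing n T B (Some A) W) \<or> (\<exists>W. T_subwing n T A W (Some B))"
proof -
  obtain a b a' b' where A: "A = (a,b)" and B: "B = (a',b')" by fastforce
  from T_arrow_shape[OF mr arrow[unfolded A B]] show ?thesis
    using T_arrow_inclusion_imp_T_subwing[OF mr] T_arrow_quotient_imp_T_subwing[OF mr] arrow
    unfolding A B by blast
qed

theorem lemma2p8:
  fixes n :: nat and T :: "ind set"
  assumes alg_closed: "\<forall>p :: 'k::field poly. degree p > 0 \<longrightarrow> (\<exists>x. poly p x = 0)"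
    and n2: "2 \<le> n"
    and maxrig: "basic_maximal_rigid n T"
  shows
   "(\<forall>X Y Z. T_subwing n T X (Some Y) (Some Z) \<longrightarrow>
       (\<exists>f :: nat \<Rightarrow> 'k. tmap n Y X f \<and> f \<noteq> (\<lambda>_. 0) \<and> irreducible_addT n T Y X f) \<and>
       (\<exists>g :: nat \<Rightarrow> 'k. tmap n X Z g \<and> g \<noteq> (\<lambda>_. 0) \<and> irreducible_addT n T X Z g))
  \<and> (\<forall>X Y. T_subwing n T X (Some Y) None \<longrightarrow>
       (\<exists>f :: nat \<Rightarrow> 'k. tmap n Y X f \<and> f \<noteq> (\<lambda>_. 0) \<and> irreducible_addT n T Y X f))
  \<and> (\<forall>X Z. T_subwing n T X None (Some Z) \<longrightarrow>
       (\<exists>g :: nat \<Rightarrow> 'k. tmap n X Z g \<and> g \<noteq> (\<lambda>_. 0) \<and> irreducible_addT n T X Z g))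
  \<and> (\<forall>A B (f :: nat \<Rightarrow> 'k). A \<in> T \<and> B \<in> T \<and> irreducible_addT n T A B f \<longrightarrow>
       (\<exists>W. T_subwing n T B (Some A) W) \<or> (\<exists>W. T_subwing n T A W (Some B)))
  \<and> (\<forall>X Y Z. T_subwing n T X (Some Y) (Some Z) \<longrightarrow>
       (\<forall>(f :: nat \<Rightarrow> 'k) g. tmap n Y X f \<and> tmap n X Z g \<longrightarrow> tcomp n Y X Z g f = (\<lambda>_. 0)))"
  using T_arrow_irreducible_map[OF maxrig] T_subwing_arrow_left[OF maxrig]
    T_subwing_arrow_right[OF maxrig] T_arrow_imp_T_subwing[OF maxrig]
    irreducible_addT_imp_T_arrow[OF maxrig] T_subwing_comp_eq_0
  by meson

end
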